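(* Let $n \equiv 1 \pmod 6$ be a positive integer and let $\alpha$ be a primitive element of $\mathbb{F}_{2^n}$ (identified with $\mathbb{F}_2^n$). If there exist $\frac{2^n-2}{42}$ pairwise disjoint complete $3$-dimensional subspaces of $\mathbb{F}_2^n$, then there exists a Steiner structure $\mathbb{S}_2[2,3,n]$.
   Context: For a $3$-dimensional $\mathbb{F}_2$-subspace $X = \{0,\alpha^{i_1},\ldots,\alpha^{i_7}\}$ of $\mathbb{F}_{2^n}$ with $i_1,\ldots,i_7\in\{0,\ldots,2^n-2\}$ distinct, its difference set is $\Delta(X) = \{ i_r - i_s \bmod (2^n-1) : 1 \le r,s\le 7,\ r\ne s\}$. $X$ is complete if $|\Delta(X)| = 42$; two complete subspaces $X,Y$ are disjoint complete (pairwise disjoint complete) if $\Delta(X)\cap\Delta(Y) = \varnothing$. A Steiner structure $\mathbb{S}_q[t,k,n]$ is a set $\mathbb{S}$ of $k$-dimensional subspaces of $\mathbb{F}_q^n$ such that every $t$-dimensional subspace of $\mathbb{F}_q^n$ is contained in exactly one element of $\mathbb{S}$. *)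

theory Defs
  imports Main
begin

text \<open>The ambient space F_2^n is identified with the additive group of a finite field
  of order 2^n.  An F_2-subspace is a subset containing 0 and closed under addition
  (the only scalars are 0 and 1).  A k-dimensional F_2-subspace has exactly 2^k elements.\<close>

definition f2_subspace :: "'a::field set \<Rightarrow> bool" where
  "f2_subspace X \<longleftrightarrow> 0 \<in> X \<and> (\<forall>x\<in>X. \<forall>y\<in>X. x + y \<in> X)"

definition f2_subspace_dim :: "nat \<Rightarrow> 'a::field set \<Rightarrow> bool" where
  "f2_subspace_dim k X \<longleftrightarrow> f2_subspace X \<and> finite X \<and> card X = 2 ^ k"

definition primitive_elem :: "nat \<Rightarrow> 'a::field \<Rightarrow> bool" where
  "primitive_elem n \<alpha> \<longleftrightarrow> \<alpha> \<noteq> 0 \<and> (\<forall>x. x \<noteq> 0 \<longrightarrow> (\<exists>i. x = \<alpha> ^ i))"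

definition dlog :: "nat \<Rightarrow> 'a::field \<Rightarrow> 'a \<Rightarrow> nat" where
  "dlog n \<alpha> x = (THE i. i < 2 ^ n - 1 \<and> \<alpha> ^ i = x)"

definition diff_set :: "nat \<Rightarrow> 'a::field \<Rightarrow> 'a set \<Rightarrow> int set" where
  "diff_set n \<alpha> X = {(int (dlog n \<alpha> a) - int (dlog n \<alpha> b)) mod (2 ^ n - 1) | a b.
       a \<in> X - {0} \<and> b \<in> X - {0} \<and> a \<noteq> b}"

definition complete_subspace :: "nat \<Rightarrow> 'a::field \<Rightarrow> 'a set \<Rightarrow> bool" where
  "complete_subspace n \<alpha> X \<longleftrightarrow> f2_subspace_dim 3 X \<and> card (diff_set n \<alpha> X) = 42"

definition disjoint_complete :: "nat \<Rightarrow> 'a::field \<Rightarrow> 'a set \<Rightarrow> 'a set \<Rightarrow> bool" where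
  "disjoint_complete n \<alpha> X Y \<longleftrightarrow> complete_subspace n \<alpha> X \<and> complete_subspace n \<alpha> Y
      \<and> diff_set n \<alpha> X \<inter> diff_set n \<alpha> Y = {}"

definition steiner_structure_2 :: "nat \<Rightarrow> nat \<Rightarrow> 'a::field set set \<Rightarrow> bool" where
  "steiner_structure_2 t k S \<longleftrightarrow> (\<forall>X\<in>S. f2_subspace_dim k X) \<and>
     (\<forall>T. f2_subspace_dim t T \<longrightarrow> (\<exists>!X. X \<in> S \<and> T \<subseteq> X))"

end

theory Submission
  imports Defs "HOL-Number_Theory.Residues"
begin

text \<open>Discrete logarithms to base \<open>\<alpha>\<close> turn the difference set of a block \<open>X\<close> into the set
  of ratios \<open>x / y\<close> of distinct nonzero \<open>x, y \<in> X\<close>.  Completeness says that the 42 ordered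
  pairs of \<open>X\<close> have distinct ratios, disjointness that two blocks share no ratio, and since
  \<open>42\<close> divides \<open>2^n - 2\<close> a count shows that the blocks then produce every field element
  outside \<open>{0, 1}\<close> exactly once as a ratio.  The Steiner structure consists of all multiples
  \<open>c X\<close> (\<open>c \<noteq> 0\<close>) of the blocks: a 2-dimensional subspace \<open>{0, a, b, a + b}\<close> lies in
  \<open>c X\<close> iff \<open>a / c, b / c \<in> X\<close>, and the ratio \<open>a / b\<close> determines \<open>X\<close>, the pair
  \<open>(a / c, b / c)\<close> and hence \<open>c\<close>.\<close>

lemma add_self_eq_zero_if_card_power_two:
  fixes x :: "'a::{field,finite}"
  assumes "card (UNIV :: 'a set) = 2 ^ n" and "n > 0"
  shows "x + x = 0"
proof -
  have prime: "prime CHAR('a)"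
    by (rule prime_CHAR_semidom) (simp add: finite_imp_CHAR_pos)
  moreover have "CHAR('a) dvd 2 ^ n"
    using CHAR_dvd_CARD[where 'a = 'a] assms(1) by simp
  ultimately have "CHAR('a) = 2"
    using prime_dvd_power primes_dvd_imp_eq two_is_prime_nat by blast
  then have "(2::'a) = 0"
    by (metis of_nat_CHAR of_nat_numeral)
  then show ?thesis
    by (metis mult_2 mult_zero_left)
qed

lemma nonzero_power_card_minus_one:
  fixes x :: "'a::{field,finite}"
  assumes "x \<noteq> 0"
  shows "x ^ (card (UNIV :: 'a set) - 1) = 1"
proof -
  have "(\<Prod>y\<in>UNIV-{0}. y) = (\<Prod>y\<in>UNIV-{0}. x * y)"
    by (rule prod.reindex_bij_witness[of _ "\<lambda>y. x * y" "\<lambda>y. y / x"]) (use assms in auto)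
  also have "\<dots> = x ^ card (UNIV - {0::'a}) * (\<Prod>y\<in>UNIV-{0}. y)"
    by (simp add: prod.distrib)
  finally show ?thesis
    by (simp add: card_Diff_singleton)
qed

definition distinct_nonzero_pairs :: "'a::zero set \<Rightarrow> ('a \<times> 'a) set" where
  "distinct_nonzero_pairs X = {(a, b). a \<in> X - {0} \<and> b \<in> X - {0} \<and> a \<noteq> b}"

definition ratios :: "'a::field set \<Rightarrow> 'a set" where
  "ratios X = (\<lambda>(a, b). a / b) ` distinct_nonzero_pairs X"

lemma ratios_subset: "ratios X \<subseteq> UNIV - {0, 1}"
  by (auto simp: ratios_def distinct_nonzero_pairs_def)

context
  fixes n :: nat and \<alpha> :: "'a::{field,finite}"
  assumes primitive: "primitive_elem n \<alpha>" and card_UNIV: "card (UNIV :: 'a set) = 2 ^ n"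
begin

lemma multiplicative_order_pos: "0 < (2::nat) ^ n - 1"
proof -
  have "card {0, 1::'a} \<le> card (UNIV :: 'a set)"
    by (rule card_mono) auto
  then show ?thesis
    using card_UNIV by simp
qed

lemma power_mod_multiplicative_order: "\<alpha> ^ (i mod (2 ^ n - 1)) = \<alpha> ^ i"
proof -
  have order: "\<alpha> ^ (2 ^ n - 1) = 1"
    using nonzero_power_card_minus_one[of \<alpha>] primitive card_UNIV by (simp add: primitive_elem_def)
  have "\<alpha> ^ i = (\<alpha> ^ (2 ^ n - 1)) ^ (i div (2 ^ n - 1)) * \<alpha> ^ (i mod (2 ^ n - 1))"
    by (simp only: power_mult[symmetric] power_add[symmetric] mult_div_mod_eq)
  also have "\<dots> = \<alpha> ^ (i mod (2 ^ n - 1))"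
    by (simp only: order power_one mult_1_left)
  finally show ?thesis
    by (rule sym)
qed

lemma inj_on_power_primitive: "inj_on (\<lambda>i. \<alpha> ^ i) {..<2 ^ n - 1}"
proof -
  have "(\<lambda>i. \<alpha> ^ i) ` {..<2 ^ n - 1} = UNIV - {0}"
  proof
    show "(\<lambda>i. \<alpha> ^ i) ` {..<2 ^ n - 1} \<subseteq> UNIV - {0}"
      using primitive by (auto simp: primitive_elem_def)
    show "UNIV - {0} \<subseteq> (\<lambda>i. \<alpha> ^ i) ` {..<2 ^ n - 1}"
    proof
      fix x :: 'a assume "x \<in> UNIV - {0}"
      then obtain i where "x = \<alpha> ^ i"
        using primitive by (auto simp: primitive_elem_def)
      then have "x = \<alpha> ^ (i mod (2 ^ n - 1))"
        by (metis power_mod_multiplicative_order)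
      then show "x \<in> (\<lambda>i. \<alpha> ^ i) ` {..<2 ^ n - 1}"
        using multiplicative_order_pos by auto
    qed
  qed
  moreover have "card (UNIV - {0::'a}) = card {..<2 ^ n - 1 :: nat}"
    using card_UNIV by (simp add: card_Diff_singleton)
  ultimately have "card ((\<lambda>i. \<alpha> ^ i) ` {..<2 ^ n - 1}) = card {..<2 ^ n - 1 :: nat}"
    by (simp only:)
  then show ?thesis
    by (rule eq_card_imp_inj_on[OF finite_lessThan])
qed

lemma dlog_eqI:
  assumes "i < 2 ^ n - 1" and "\<alpha> ^ i = x"
  shows "dlog n \<alpha> x = i"
  unfolding dlog_def
proof (rule the_equality)
  show "i < 2 ^ n - 1 \<and> \<alpha> ^ i = x"
    using assms ..
  show "j = i" if "j < 2 ^ n - 1 \<and> \<alpha> ^ j = x" for j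
    using that assms inj_on_power_primitive by (auto dest: inj_onD)
qed

lemma dlog_less_and_power_dlog:
  assumes "x \<noteq> 0"
  shows "dlog n \<alpha> x < 2 ^ n - 1" and "\<alpha> ^ dlog n \<alpha> x = x"
proof -
  obtain i where i: "\<alpha> ^ i = x"
    using primitive assms by (auto simp: primitive_elem_def)
  have "i mod (2 ^ n - 1) < 2 ^ n - 1" and "\<alpha> ^ (i mod (2 ^ n - 1)) = x"
    using multiplicative_order_pos i power_mod_multiplicative_order by simp_all
  moreover from this have "dlog n \<alpha> x = i mod (2 ^ n - 1)"
    by (rule dlog_eqI)
  ultimately show "dlog n \<alpha> x < 2 ^ n - 1" and "\<alpha> ^ dlog n \<alpha> x = x"
    by simp_all
qed

lemma inj_on_dlog: "inj_on (dlog n \<alpha>) (UNIV - {0})"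
  by (rule inj_on_inverseI[where g = "\<lambda>i. \<alpha> ^ i"]) (simp add: dlog_less_and_power_dlog)

lemma dlog_divide:
  assumes "a \<noteq> 0" and "b \<noteq> 0"
  shows "int (dlog n \<alpha> (a / b)) = (int (dlog n \<alpha> a) - int (dlog n \<alpha> b)) mod (2 ^ n - 1)"
proof -
  define N where "N = (2::nat) ^ n - 1"
  have N_pos: "0 < N"
    using multiplicative_order_pos by (simp add: N_def)
  have power_mod: "\<alpha> ^ (i mod N) = \<alpha> ^ i" for i
    unfolding N_def by (rule power_mod_multiplicative_order)
  define j where "j = nat ((int (dlog n \<alpha> a) - int (dlog n \<alpha> b)) mod int N)"
  have int_j: "int j = (int (dlog n \<alpha> a) - int (dlog n \<alpha> b)) mod int N"
    unfolding j_def using N_pos by simp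
  then have "j < N"
    using N_pos by (metis of_nat_0_less_iff of_nat_less_iff pos_mod_bound)
  have "int ((j + dlog n \<alpha> b) mod N) = int (dlog n \<alpha> a) mod int N"
    by (simp add: int_j zmod_int mod_add_left_eq)
  moreover have "dlog n \<alpha> a < N"
    using dlog_less_and_power_dlog(1)[OF assms(1)] by (simp add: N_def)
  ultimately have j_add: "(j + dlog n \<alpha> b) mod N = dlog n \<alpha> a"
    by (simp flip: zmod_int)
  have "\<alpha> ^ j * b = \<alpha> ^ ((j + dlog n \<alpha> b) mod N)"
    using dlog_less_and_power_dlog(2)[OF assms(2)]
    by (simp add: power_mod power_add)
  also have "\<dots> = a"
    using dlog_less_and_power_dlog(2)[OF assms(1)] by (simp add: j_add)
  finally have "dlog n \<alpha> (a / b) = j"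
    using assms(2) \<open>j < N\<close> by (intro dlog_eqI) (auto simp: N_def field_simps)
  moreover have "int N = 2 ^ n - 1"
    by (simp add: N_def of_nat_diff)
  ultimately show ?thesis
    using int_j by simp
qed

lemma inj_on_dlog_ratios: "inj_on (\<lambda>r. int (dlog n \<alpha> r)) (ratios X)"
  using inj_on_dlog ratios_subset by (auto simp: inj_on_def)

lemma diff_set_eq_image_dlog_ratios: "diff_set n \<alpha> X = (\<lambda>r. int (dlog n \<alpha> r)) ` ratios X"
  unfolding diff_set_def ratios_def distinct_nonzero_pairs_def by (force simp: dlog_divide)

lemma card_diff_set: "card (diff_set n \<alpha> X) = card (ratios X)"
  unfolding diff_set_eq_image_dlog_ratios by (rule card_image[OF inj_on_dlog_ratios])

lemma diff_set_disjoint_iff: "diff_set n \<alpha> X \<inter> diff_set n \<alpha> Y = {} \<longleftrightarrow> ratios X \<inter> ratios Y = {}"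
proof -
  have "inj_on (\<lambda>r. int (dlog n \<alpha> r)) (UNIV - {0, 1})"
    using inj_on_dlog by (auto simp: inj_on_def)
  then have "diff_set n \<alpha> X \<inter> diff_set n \<alpha> Y = (\<lambda>r. int (dlog n \<alpha> r)) ` (ratios X \<inter> ratios Y)"
    unfolding diff_set_eq_image_dlog_ratios by (simp add: inj_on_image_Int ratios_subset)
  then show ?thesis
    by simp
qed

end

lemma finite_distinct_nonzero_pairs: "finite X \<Longrightarrow> finite (distinct_nonzero_pairs X)"
  by (rule finite_subset[of _ "X \<times> X"]) (auto simp: distinct_nonzero_pairs_def)

lemma card_distinct_nonzero_pairs:
  assumes "finite X"
  shows "card (distinct_nonzero_pairs X) = card (X - {0}) * (card (X - {0}) - 1)"
proof -
  let ?X0 = "X - {0}" and ?diag = "(\<lambda>x. (x, x)) ` (X - {0})"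
  have "distinct_nonzero_pairs X = ?X0 \<times> ?X0 - ?diag"
    by (auto simp: distinct_nonzero_pairs_def)
  moreover have "card ?diag = card ?X0"
    by (rule card_image) (simp add: inj_on_def)
  moreover have "?diag \<subseteq> ?X0 \<times> ?X0"
    by auto
  ultimately show ?thesis
    using assms by (simp add: card_Diff_subset card_cartesian_product diff_mult_distrib2)
qed

lemma card_distinct_nonzero_pairs_f2_subspace_dim:
  assumes "f2_subspace_dim k X"
  shows "card (distinct_nonzero_pairs X) = (2 ^ k - 1) * (2 ^ k - 2)"
proof -
  have "card (X - {0}) = 2 ^ k - 1"
    using assms by (simp add: f2_subspace_dim_def f2_subspace_def card_Diff_singleton)
  then show ?thesis
    using assms by (simp add: card_distinct_nonzero_pairs f2_subspace_dim_def numeral_2_eq_2)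
qed

lemma inj_on_divide_if_card_ratios:
  assumes "finite X" and "card (ratios X) = card (distinct_nonzero_pairs X)"
  shows "inj_on (\<lambda>(a, b). a / b) (distinct_nonzero_pairs X)"
  using assms by (intro eq_card_imp_inj_on) (simp_all add: ratios_def finite_distinct_nonzero_pairs)

lemma f2_subspace_dim_scale:
  fixes X :: "'a::field set"
  assumes "c \<noteq> 0" and "f2_subspace_dim k X"
  shows "f2_subspace_dim k ((*) c ` X)"
proof -
  have "inj_on ((*) c) X"
    using assms(1) by (auto simp: inj_on_def)
  moreover have "x + y \<in> (*) c ` X" if xy: "x \<in> (*) c ` X" "y \<in> (*) c ` X" for x y
  proof -
    obtain u v where "u \<in> X" "v \<in> X" "x = c * u" "y = c * v"
      using xy by blast
    moreover from this have "u + v \<in> X"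
      using assms(2) by (simp add: f2_subspace_dim_def f2_subspace_def)
    ultimately show ?thesis
      by (metis distrib_left image_eqI)
  qed
  moreover have "0 \<in> (*) c ` X"
    using assms(2) by (force simp: f2_subspace_dim_def f2_subspace_def)
  ultimately show ?thesis
    using assms(2) by (simp add: f2_subspace_dim_def f2_subspace_def card_image)
qed

lemma f2_subspace_dim_2_elim:
  fixes T :: "'a::field set"
  assumes char_two: "\<And>x::'a. x + x = 0" and "f2_subspace_dim 2 T"
  obtains a b where "a \<in> T" "b \<in> T" "a \<noteq> 0" "b \<noteq> 0" "a \<noteq> b" "T \<subseteq> {0, a, b, a + b}"
proof -
  have "finite T" "card T = 4" "0 \<in> T" and closed: "\<And>x y. x \<in> T \<Longrightarrow> y \<in> T \<Longrightarrow> x + y \<in> T"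
    using assms(2) by (auto simp: f2_subspace_dim_def f2_subspace_def)
  then have "card (T - {0}) = 3"
    by (simp add: card_Diff_singleton)
  then obtain a b e where abe: "T - {0} = {a, b, e}" "a \<noteq> b" "b \<noteq> e" "a \<noteq> e"
    by (auto simp: card_3_iff)
  have "a + b \<noteq> 0"
    using char_two[of b] abe(2) by (metis add_right_cancel)
  moreover have "a + b \<noteq> a" "a + b \<noteq> b"
    using abe by auto
  moreover have "a + b \<in> T"
    using closed abe(1) by blast
  ultimately have "a + b = e"
    using abe(1) by blast
  then show ?thesis
    using that abe by blast
qed

lemma ratios_cover:
  fixes F :: "'a::{field,finite} set set"
  assumes card_ratios: "\<And>X. X \<in> F \<Longrightarrow> card (ratios X) = m"
    and disjoint: "\<And>X Y. X \<in> F \<Longrightarrow> Y \<in> F \<Longrightarrow> X \<noteq> Y \<Longrightarrow> ratios X \<inter> ratios Y = {}"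
    and card_F: "m * card F = card (UNIV :: 'a set) - 2"
  shows "(\<Union>X\<in>F. ratios X) = UNIV - {0, 1}"
proof (rule card_subset_eq)
  show "(\<Union>X\<in>F. ratios X) \<subseteq> UNIV - {0, 1}"
    using ratios_subset by blast
  have "card (\<Union>X\<in>F. ratios X) = (\<Sum>X\<in>F. card (ratios X))"
    using disjoint by (intro card_UN_disjoint) auto
  also have "\<dots> = card (UNIV - {0, 1::'a})"
    using card_ratios card_F by (simp add: card_Diff_subset mult.commute)
  finally show "card (\<Union>X\<in>F. ratios X) = card (UNIV - {0, 1::'a})" .
qed simp

context
  fixes F :: "'a::field set set"
  assumes inj_ratios: "\<And>X. X \<in> F \<Longrightarrow> inj_on (\<lambda>(a, b). a / b) (distinct_nonzero_pairs X)"
    and disjoint_ratios: "\<And>X Y. X \<in> F \<Longrightarrow> Y \<in> F \<Longrightarrow> X \<noteq> Y \<Longrightarrow> ratios X \<inter> ratios Y = {}"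
    and cover_ratios: "(\<Union>X\<in>F. ratios X) = UNIV - {0, 1}"
begin

lemma scaled_block_through_pair:
  assumes "a \<noteq> 0" "b \<noteq> 0" "a \<noteq> b"
  obtains c X where "c \<noteq> 0" "X \<in> F" "a \<in> (*) c ` X" "b \<in> (*) c ` X"
proof -
  have "a / b \<in> UNIV - {0, 1}"
    using assms by auto
  then obtain X x y where X: "X \<in> F" "(x, y) \<in> distinct_nonzero_pairs X" "a / b = x / y"
    unfolding cover_ratios[symmetric] ratios_def by auto
  then have xy: "x \<in> X" "y \<in> X" "x \<noteq> 0" "y \<noteq> 0"
    by (auto simp: distinct_nonzero_pairs_def)
  have "a / x * x = a" and "a / x * y = b"
    using assms xy X(3) by (simp_all add: field_simps)
  then have "a \<in> (*) (a / x) ` X" "b \<in> (*) (a / x) ` X"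
    using xy by (metis image_eqI)+
  moreover have "a / x \<noteq> 0"
    using assms xy by simp
  ultimately show ?thesis
    using that X(1) by blast
qed

lemma scaled_block_through_pair_unique:
  assumes "X \<in> F" "X' \<in> F" "c \<noteq> 0" "c' \<noteq> 0" "a \<noteq> 0" "b \<noteq> 0" "a \<noteq> b"
    and "a \<in> (*) c ` X" "b \<in> (*) c ` X" "a \<in> (*) c' ` X'" "b \<in> (*) c' ` X'"
  shows "(*) c ` X = (*) c' ` X'"
proof -
  obtain x y x' y' where "x \<in> X" "y \<in> X" "x' \<in> X'" "y' \<in> X'"
    and a: "a = c * x" "a = c' * x'" and b: "b = c * y" "b = c' * y'"
    using assms(8-11) by blast
  then have pairs: "(x, y) \<in> distinct_nonzero_pairs X" "(x', y') \<in> distinct_nonzero_pairs X'"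
    using assms(5-7) by (auto simp: distinct_nonzero_pairs_def)
  have "x / y = a / b"
    using a(1) b(1) assms(3) by simp
  moreover have "x' / y' = a / b"
    using a(2) b(2) assms(4) by simp
  ultimately have "a / b \<in> ratios X \<inter> ratios X'"
    using pairs unfolding ratios_def by (metis (no_types, lifting) IntI case_prod_conv image_eqI)
  then have "X = X'"
    using disjoint_ratios assms(1,2) by blast
  have "(x, y) = (x', y')"
    by (rule inj_onD[OF inj_ratios[OF assms(1)]])
      (use pairs \<open>X = X'\<close> \<open>x / y = a / b\<close> \<open>x' / y' = a / b\<close> in simp_all)
  then have "c = c'"
    using a pairs by (auto simp: distinct_nonzero_pairs_def)
  with \<open>X = X'\<close> show ?thesis
    by simp
qed

lemma steiner_structure_of_ratio_partition:
  assumes char_two: "\<And>x::'a. x + x = 0" and dim: "\<And>X. X \<in> F \<Longrightarrow> f2_subspace_dim 3 X"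
  shows "steiner_structure_2 2 3 {(*) c ` X | c X. c \<noteq> 0 \<and> X \<in> F}"
    (is "steiner_structure_2 2 3 ?S")
proof -
  have dim_S: "f2_subspace_dim 3 Y" if "Y \<in> ?S" for Y
    using that by (auto intro: f2_subspace_dim_scale dim)
  have unique_block: "\<exists>!Y. Y \<in> ?S \<and> T \<subseteq> Y" if T: "f2_subspace_dim 2 T" for T
  proof -
    obtain a b where ab: "a \<in> T" "b \<in> T" "a \<noteq> 0" "b \<noteq> 0" "a \<noteq> b" "T \<subseteq> {0, a, b, a + b}"
      using f2_subspace_dim_2_elim[OF char_two T] .
    have contains_T: "T \<subseteq> Y \<longleftrightarrow> a \<in> Y \<and> b \<in> Y" if "Y \<in> ?S" for Y
    proof -
      have "0 \<in> Y" "a \<in> Y \<Longrightarrow> b \<in> Y \<Longrightarrow> a + b \<in> Y"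
        using dim_S[OF that] by (simp_all add: f2_subspace_dim_def f2_subspace_def)
      then show ?thesis
        using ab by blast
    qed
    show ?thesis
    proof (rule ex_ex1I)
      obtain c X where c: "c \<noteq> 0" "X \<in> F" and ab_in: "a \<in> (*) c ` X" "b \<in> (*) c ` X"
        using scaled_block_through_pair[OF ab(3-5)] .
      from c have block: "(*) c ` X \<in> ?S"
        by blast
      with ab_in have "T \<subseteq> (*) c ` X"
        using contains_T by blast
      with block show "\<exists>Y. Y \<in> ?S \<and> T \<subseteq> Y"
        by blast
    next
      fix Y Y' assume Y: "Y \<in> ?S \<and> T \<subseteq> Y" and Y': "Y' \<in> ?S \<and> T \<subseteq> Y'"
      then obtain c X c' X' where blocks: "Y = (*) c ` X" "Y' = (*) c' ` X'"
        and c: "X \<in> F" "X' \<in> F" "c \<noteq> 0" "c' \<noteq> 0"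
        by blast
      have "a \<in> Y \<and> b \<in> Y" "a \<in> Y' \<and> b \<in> Y'"
        using Y Y' contains_T[of Y] contains_T[of Y'] by simp_all
      then show "Y = Y'"
        unfolding blocks using scaled_block_through_pair_unique[OF c ab(3-5)] by simp
    qed
  qed
  show ?thesis
    unfolding steiner_structure_2_def using dim_S unique_block by simp
qed

end

lemma forty_two_dvd_two_power_minus_two:
  assumes "n mod 6 = 1"
  shows "42 dvd (2::nat) ^ n - 2"
proof -
  define k where "k = n div 6"
  have n: "n = 6 * k + 1"
    using assms unfolding k_def by presburger
  have "[64 ^ k = 1 ^ k] (mod (63::nat))"
    by (rule cong_pow) (simp add: cong_def)
  then have "63 dvd (64::nat) ^ k - 1"
    by (intro cong_to_1_nat) simp
  then have "2 * 63 dvd 2 * ((64::nat) ^ k - 1)"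
    by (rule mult_dvd_mono[OF dvd_refl])
  moreover have "2 * ((64::nat) ^ k - 1) = 2 ^ n - 2"
    by (simp add: n power_add power_mult diff_mult_distrib2)
  ultimately have "2 * 63 dvd (2::nat) ^ n - 2"
    by (simp only:)
  then show ?thesis
    by (rule dvd_trans[rotated]) simp
qed

theorem theorem1:
  fixes n :: nat and \<alpha> :: "'a::{field,finite}"
  assumes "n > 0" and "n mod 6 = 1"
    and "card (UNIV :: 'a set) = 2 ^ n"
    and "primitive_elem n \<alpha>"
    and "\<exists>F. card F = (2 ^ n - 2) div 42 \<and> (\<forall>X\<in>F. complete_subspace n \<alpha> X)
            \<and> (\<forall>X\<in>F. \<forall>Y\<in>F. X \<noteq> Y \<longrightarrow> disjoint_complete n \<alpha> X Y)"
  shows "\<exists>S::'a set set. steiner_structure_2 2 3 S"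
proof -
  obtain F where card_F: "card F = (2 ^ n - 2) div 42"
    and complete: "\<forall>X\<in>F. complete_subspace n \<alpha> X"
    and disjoint: "\<forall>X\<in>F. \<forall>Y\<in>F. X \<noteq> Y \<longrightarrow> disjoint_complete n \<alpha> X Y"
    using assms(5) by blast
  have dim: "f2_subspace_dim 3 X" and card_ratios: "card (ratios X) = 42" if "X \<in> F" for X
    using complete that card_diff_set[OF assms(4,3)] by (simp_all add: complete_subspace_def)
  have disjoint_ratios: "ratios X \<inter> ratios Y = {}" if "X \<in> F" "Y \<in> F" "X \<noteq> Y" for X Y
    using disjoint that diff_set_disjoint_iff[OF assms(4,3)] by (simp add: disjoint_complete_def)
  have inj: "inj_on (\<lambda>(a, b). a / b) (distinct_nonzero_pairs X)" if "X \<in> F" for X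
    using dim[OF that] card_ratios[OF that] card_distinct_nonzero_pairs_f2_subspace_dim[OF dim[OF that]]
    by (intro inj_on_divide_if_card_ratios) (simp_all add: f2_subspace_dim_def)
  have "(\<Union>X\<in>F. ratios X) = UNIV - {0, 1}"
    using card_F assms(3) forty_two_dvd_two_power_minus_two[OF assms(2)]
    by (intro ratios_cover[OF card_ratios disjoint_ratios]) simp_all
  then show ?thesis
    using steiner_structure_of_ratio_partition[OF inj disjoint_ratios _
        add_self_eq_zero_if_card_power_two[OF assms(3,1)] dim]
    by blast
qed

end
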